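(* Let $\tilde S\subseteq\mathfrak P$ and $a,b\in\mathcal C_{\mathfrak P}(\tilde S)$ with $\omega_{\tilde S}(a)<\omega_{\tilde S}(b)$. Then $\omega_{\tilde S}(a\cdot b)=\omega_{\tilde S}(a)$.
   Context: $\mathfrak P$ is the group of $N$-qubit Pauli operators modulo phases; $\mathcal C_{\mathfrak P}(\tilde S)$ is the centralizer of $\tilde S$ in $\mathfrak P$. The weight of a Pauli operator is its number of non-identity tensor factors. For $l\in\mathcal C_{\mathfrak P}(\tilde S)$, $\omega_{\tilde S}(l)$ is the minimum weight of an operator $e\in\mathcal C_{\mathfrak P}(\tilde S)$ that anticommutes with $l$, with value $+\infty$ if no such $e$ exists. *)

theory Defs
  imports Main "HOL-Library.Extended_Nat"
begin

text \<open>Single-qubit Pauli operators modulo phases.\<close>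
datatype pauli1 = PI | PX | PY | PZ

fun pmult1 :: "pauli1 \<Rightarrow> pauli1 \<Rightarrow> pauli1" where
  "pmult1 PI q = q"
| "pmult1 p PI = p"
| "pmult1 PX PX = PI" | "pmult1 PY PY = PI" | "pmult1 PZ PZ = PI"
| "pmult1 PX PY = PZ" | "pmult1 PY PX = PZ"
| "pmult1 PX PZ = PY" | "pmult1 PZ PX = PY"
| "pmult1 PY PZ = PX" | "pmult1 PZ PY = PX"

text \<open>N-qubit Paulis modulo phases: the qubits are indexed by a finite type 'n (N = CARD('n)).\<close>
type_synonym 'n pauli = "'n \<Rightarrow> pauli1"

definition pmult :: "'n pauli \<Rightarrow> 'n pauli \<Rightarrow> 'n pauli" where
  "pmult p q = (\<lambda>i. pmult1 (p i) (q i))"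

text \<open>Two N-qubit Paulis anticommute iff they anticommute on an odd number of qubits.\<close>
definition anticommute :: "('n::finite) pauli \<Rightarrow> 'n pauli \<Rightarrow> bool" where
  "anticommute p q = odd (card {i. p i \<noteq> PI \<and> q i \<noteq> PI \<and> p i \<noteq> q i})"

definition weight :: "('n::finite) pauli \<Rightarrow> nat" where
  "weight p = card {i. p i \<noteq> PI}"

definition centralizer :: "('n::finite) pauli set \<Rightarrow> 'n pauli set" where
  "centralizer S = {e. \<forall>s\<in>S. \<not> anticommute e s}"

text \<open>omega S l: minimum weight of e in the centralizer anticommuting with l; infinity if none
  (Inf of the empty set of enat is infinity).\<close>
definition omega :: "('n::finite) pauli set \<Rightarrow> 'n pauli \<Rightarrow> enat" where
  "omega S l = (INF e\<in>{e\<in>centralizer S. anticommute e l}. enat (weight e))"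

end

theory Submission
  imports Defs
begin

text \<open>Anticommutation is a symplectic form over GF(2): it is additive in each argument
  (qubit-wise, the Klein four-group commutation pattern is bilinear). Hence if every
  \<open>e\<close> of weight below \<open>\<omega>(b)\<close> commutes with \<open>b\<close>, such an \<open>e\<close> anticommutes with \<open>a b\<close> exactly
  when it anticommutes with \<open>a\<close>; since \<open>\<omega>(a) < \<omega>(b)\<close>, both minima are attained below that
  threshold and so coincide.\<close>

definition anticommute1 :: "pauli1 \<Rightarrow> pauli1 \<Rightarrow> bool" where
  "anticommute1 p q \<longleftrightarrow> p \<noteq> PI \<and> q \<noteq> PI \<and> p \<noteq> q"

lemma anticommute1_pmult1:
  "anticommute1 e (pmult1 p q) \<longleftrightarrow> anticommute1 e p \<noteq> anticommute1 e q"
  by (cases e; cases p; cases q) (simp_all add: anticommute1_def)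

lemma anticommute_iff_odd_card_anticommute1:
  "anticommute p q \<longleftrightarrow> odd (card {i. anticommute1 (p i) (q i)})"
  unfolding anticommute_def anticommute1_def ..

lemma odd_card_Collect_neq:
  fixes P Q :: "'n::finite \<Rightarrow> bool"
  shows "odd (card {i. P i \<noteq> Q i}) \<longleftrightarrow> odd (card {i. P i}) \<noteq> odd (card {i. Q i})"
proof -
  let ?A = "{i. P i}" and ?B = "{i. Q i}"
  have "{i. P i \<noteq> Q i} = (?A - ?A \<inter> ?B) \<union> (?B - ?A \<inter> ?B)" by auto
  then have "card {i. P i \<noteq> Q i} = (card ?A - card (?A \<inter> ?B)) + (card ?B - card (?A \<inter> ?B))"
    by (simp only:) (subst card_Un_disjoint; auto simp: card_Diff_subset)
  moreover have "card (?A \<inter> ?B) \<le> card ?A" "card (?A \<inter> ?B) \<le> card ?B"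
    by (auto intro: card_mono)
  ultimately show ?thesis by auto
qed

lemma anticommute_pmult:
  "anticommute e (pmult p q) \<longleftrightarrow> anticommute e p \<noteq> anticommute e q"
  using odd_card_Collect_neq[of "\<lambda>i. anticommute1 (e i) (p i)" "\<lambda>i. anticommute1 (e i) (q i)"]
  by (simp add: anticommute_iff_odd_card_anticommute1 pmult_def anticommute1_pmult1)

lemma omega_le_weight:
  assumes "e \<in> centralizer S" and "anticommute e l"
  shows "omega S l \<le> enat (weight e)"
  unfolding omega_def using assms by (auto intro: INF_lower)

lemma le_omega:
  assumes "\<And>e. e \<in> centralizer S \<Longrightarrow> anticommute e l \<Longrightarrow> x \<le> enat (weight e)"
  shows "x \<le> omega S l"
  unfolding omega_def using assms by (auto intro: INF_greatest)

lemma omega_attained: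
  assumes "omega S l < \<infinity>"
  obtains e where "e \<in> centralizer S" and "anticommute e l" and "omega S l = enat (weight e)"
proof -
  let ?A = "{e \<in> centralizer S. anticommute e l}"
  let ?W = "(\<lambda>e. enat (weight e)) ` ?A"
  have "?W \<noteq> {}"
  proof
    assume "?W = {}"
    then have "omega S l = \<infinity>"
      unfolding omega_def Inf_enat_def by (rule if_P)
    with assms show False by simp
  qed
  then have "omega S l = (LEAST x. x \<in> ?W)"
    unfolding omega_def Inf_enat_def by (rule if_not_P)
  moreover obtain w where "w \<in> ?W"
    using \<open>?W \<noteq> {}\<close> by blast
  then have "(LEAST x. x \<in> ?W) \<in> ?W" by (rule LeastI)
  ultimately obtain e where "e \<in> ?A" and "omega S l = enat (weight e)"
    by auto
  then show thesis
    using that by blast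
qed

lemma omega_eq_if_anticommute_agree_below:
  assumes agree: "\<And>e. e \<in> centralizer S \<Longrightarrow> enat (weight e) < t \<Longrightarrow>
      anticommute e l' \<longleftrightarrow> anticommute e l"
    and below: "omega S l < t"
  shows "omega S l' = omega S l"
proof (rule antisym)
  have "omega S l < \<infinity>"
    using below by (rule less_le_trans) simp
  then obtain e where e: "e \<in> centralizer S" "anticommute e l" "omega S l = enat (weight e)"
    by (rule omega_attained)
  then have "anticommute e l'"
    using agree below by simp
  then show "omega S l' \<le> omega S l"
    using omega_le_weight[OF e(1)] e(3) by simp
next
  show "omega S l \<le> omega S l'"
  proof (rule le_omega)
    fix e assume e: "e \<in> centralizer S" "anticommute e l'"
    show "omega S l \<le> enat (weight e)"
    proof (cases "enat (weight e) < t")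
      case True
      with e agree have "anticommute e l" by blast
      with e(1) show ?thesis by (rule omega_le_weight)
    next
      case False
      then show ?thesis using below by simp
    qed
  qed
qed

lemma commute_if_weight_less_omega:
  assumes "e \<in> centralizer S" and "enat (weight e) < omega S b"
  shows "\<not> anticommute e b"
  using omega_le_weight assms by fastforce

theorem lemma3:
  fixes S :: "('n::finite) pauli set" and a b :: "'n pauli"
  assumes "a \<in> centralizer S" and "b \<in> centralizer S"
    and "omega S a < omega S b"
  shows "omega S (pmult a b) = omega S a"
proof (rule omega_eq_if_anticommute_agree_below)
  fix e assume "e \<in> centralizer S" "enat (weight e) < omega S b"
  then show "anticommute e (pmult a b) \<longleftrightarrow> anticommute e a"
    by (simp add: anticommute_pmult commute_if_weight_less_omega)
qed (fact assms(3))

end
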